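(* Let $\mathscr{S}\subset\mathbb{Z}^2$ be a finite set defining a non-trivial quarter-plane model, let $\theta^*$ be as in the context, and assume $m=\tan\theta^*$ is irrational. Then the language $\mathcal{L}_m$ over the alphabet $\mathscr{S}$ consisting of the words (step sequences) whose associated walks from the origin lie in $\mathrm{walks}(H_{\theta^*},\mathscr{S})$ is not context-free.
   Context: $H_\theta=\{(x,y):x\sin\theta+y\cos\theta\ge0\}$; $\mathrm{walks}(C,\mathscr{S})$ is the set of walks $x_0=(0,0),x_1,\dots,x_n$ ($n\ge0$) with $x_{j+1}-x_j\in\mathscr{S}$ and all $x_i\in C$. With $h^{\mathscr{S}}_n(\theta)=|\mathrm{walks}(H_\theta,\mathscr{S},n)|$ and $\rho(\theta)^{-1}=\lim_n h^{\mathscr{S}}_n(\theta)^{1/n}$, set $\theta^*=\arg\max_{0\le\theta\le\pi/2}\rho(\theta)$. The projected steps are $\mathscr{A}(\theta)=\{i\sin\theta+j\cos\theta:(i,j)\in\mathscr{S}\}$. Non-triviality is used in the form: there exist steps whose projections $a\in\mathscr{A}(\theta^* )$, $-b\in\mathscr{A}(\theta^* )$ satisfy $a>0$, $b>0$ and $a/b$ irrational. *)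

theory Defs
  imports Complex_Main
begin

definition halfplane :: "real \<Rightarrow> (int \<times> int) set" where
  "halfplane \<theta> = {p. real_of_int (fst p) * sin \<theta> + real_of_int (snd p) * cos \<theta> \<ge> 0}"

definition walk_pos :: "(int \<times> int) list \<Rightarrow> nat \<Rightarrow> int \<times> int" where
  "walk_pos w k = ((\<Sum>i<k. fst (w ! i)), (\<Sum>i<k. snd (w ! i)))"

definition walk_in :: "(int \<times> int) set \<Rightarrow> (int \<times> int) list \<Rightarrow> bool" where
  "walk_in C w \<longleftrightarrow> (\<forall>k\<le>length w. walk_pos w k \<in> C)"

definition walks :: "(int \<times> int) set \<Rightarrow> (int \<times> int) set \<Rightarrow> (int \<times> int) list set" where
  "walks C S = {w. set w \<subseteq> S \<and> walk_in C w}"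

definition hcount :: "(int \<times> int) set \<Rightarrow> nat \<Rightarrow> real \<Rightarrow> nat" where
  "hcount S n \<theta> = card {w \<in> walks (halfplane \<theta>) S. length w = n}"

definition rho :: "(int \<times> int) set \<Rightarrow> real \<Rightarrow> real" where
  "rho S \<theta> = inverse (lim (\<lambda>n. real (hcount S n \<theta>) powr (1 / real n)))"

datatype ('n, 't) sym = NT 'n | Tm 't

definition derive1 :: "('n \<times> ('n, 't) sym list) set \<Rightarrow> ('n, 't) sym list \<Rightarrow> ('n, 't) sym list \<Rightarrow> bool" where
  "derive1 P u v \<longleftrightarrow> (\<exists>l A r \<alpha>. u = l @ [NT A] @ r \<and> (A, \<alpha>) \<in> P \<and> v = l @ \<alpha> @ r)"

definition cfg_lang :: "('n \<times> ('n, 't) sym list) set \<Rightarrow> 'n \<Rightarrow> 't list set" where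
  "cfg_lang P S0 = {w. (derive1 P)\<^sup>*\<^sup>* [NT S0] (map Tm w)}"

text \<open>A language is context-free if it is generated by a context-free grammar with
  finitely many productions (nonterminals taken from nat, which is no restriction).\<close>
definition context_free :: "'t list set \<Rightarrow> bool" where
  "context_free L \<longleftrightarrow> (\<exists>(P :: (nat \<times> (nat, 't) sym list) set) S0. finite P \<and> L = cfg_lang P S0)"

end

theory Submission
  imports Defs "HOL-Analysis.Kronecker_Approximation_Theorem"
begin

text \<open>Let \<open>a > 0\<close> and \<open>-b < 0\<close> be the projections of two steps \<open>A\<close>, \<open>B\<close> on the normal of the
  half-plane, with \<open>a/b\<close> irrational. The word \<open>A\<^sup>n B\<^sup>m\<close> stays in the half-plane and ends at height
  \<open>n a - m b\<close>. If it is pumped with pumping length \<open>p\<close>, then pumping down and pumping up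
  arbitrarily often keep it in the language only if the pumped part has projection
  \<open>c = j a - k b\<close> with \<open>j + k \<le> p\<close> and \<open>0 \<le> c \<le> n a - m b\<close>. Irrationality excludes \<open>c = 0\<close>, and
  by Kronecker's theorem \<open>n, m\<close> can be chosen with \<open>0 < n a - m b\<close> smaller than every positive
  \<open>j a - k b\<close> with \<open>j, k \<le> p\<close>.\<close>

section \<open>The pumping lemma for context-free languages\<close>

datatype ('n, 't) tree = Leaf 't | Node 'n "('n, 't) tree list"

fun tree_root :: "('n, 't) tree \<Rightarrow> ('n, 't) sym" where
  "tree_root (Leaf t) = Tm t"
| "tree_root (Node A ts) = NT A"

fun yield :: "('n, 't) tree \<Rightarrow> 't list" where
  "yield (Leaf t) = [t]"
| "yield (Node A ts) = concat (map yield ts)"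

fun parse_tree :: "('n \<times> ('n, 't) sym list) set \<Rightarrow> ('n, 't) tree \<Rightarrow> bool" where
  "parse_tree P (Leaf t) = True"
| "parse_tree P (Node A ts) = ((A, map tree_root ts) \<in> P \<and> (\<forall>t\<in>set ts. parse_tree P t))"

fun tree_size :: "('n, 't) tree \<Rightarrow> nat" where
  "tree_size (Leaf t) = 1"
| "tree_size (Node A ts) = Suc (sum_list (map tree_size ts))"

fun height :: "('n, 't) tree \<Rightarrow> nat" where
  "height (Leaf t) = 0"
| "height (Node A ts) = Suc (Max (set (0 # map height ts)))"

lemma derives_context:
  "(derive1 P)\<^sup>*\<^sup>* u v \<Longrightarrow> (derive1 P)\<^sup>*\<^sup>* (l @ u @ r) (l @ v @ r)"
proof (induction rule: rtranclp_induct)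
  case (step v w)
  from \<open>derive1 P v w\<close> have "derive1 P (l @ v @ r) (l @ w @ r)"
    unfolding derive1_def by (metis append_assoc)
  with step.IH show ?case by (rule rtranclp.rtrancl_into_rtrancl)
qed simp

lemma derives_append:
  assumes "(derive1 P)\<^sup>*\<^sup>* u u'" and "(derive1 P)\<^sup>*\<^sup>* v v'"
  shows "(derive1 P)\<^sup>*\<^sup>* (u @ v) (u' @ v')"
proof -
  have "(derive1 P)\<^sup>*\<^sup>* (u @ v) (u' @ v)"
    using derives_context[OF assms(1), of "[]" v] by (simp only: append_Nil)
  also have "(derive1 P)\<^sup>*\<^sup>* (u' @ v) (u' @ v')"
    using derives_context[OF assms(2), of u' "[]"] by (simp only: append_Nil2)
  finally show ?thesis .
qed

lemma derive1_Node:
  "(A, map tree_root (ts1 @ ts2)) \<in> P \<Longrightarrow> derive1 P [NT A] (map tree_root ts1 @ map tree_root ts2)"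
  unfolding derive1_def by (metis append_Nil append_Nil2 map_append)

lemma parse_forest_derives:
  "\<forall>t\<in>set ts. (derive1 P)\<^sup>*\<^sup>* [tree_root t] (map Tm (yield t)) \<Longrightarrow>
   (derive1 P)\<^sup>*\<^sup>* (map tree_root ts) (map Tm (concat (map yield ts)))"
proof (induction ts)
  case (Cons t ts)
  then show ?case using derives_append[of P "[tree_root t]" _ "map tree_root ts"] by simp
qed simp

lemma parse_tree_derives: "parse_tree P t \<Longrightarrow> (derive1 P)\<^sup>*\<^sup>* [tree_root t] (map Tm (yield t))"
proof (induction t)
  case (Node A ts)
  have "derive1 P [NT A] (map tree_root ts)"
    using Node.prems derive1_Node[of A "[]" ts] by simp
  moreover have "(derive1 P)\<^sup>*\<^sup>* (map tree_root ts) (map Tm (concat (map yield ts)))"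
    using Node by (intro parse_forest_derives) auto
  ultimately show ?case by (simp add: converse_rtranclp_into_rtranclp)
qed simp

lemma derives_parse_forest:
  "(derive1 P)\<^sup>*\<^sup>* \<alpha> (map Tm w) \<Longrightarrow>
   \<exists>ts. map tree_root ts = \<alpha> \<and> (\<forall>t\<in>set ts. parse_tree P t) \<and> concat (map yield ts) = w"
proof (induction rule: converse_rtranclp_induct)
  case base
  show ?case by (rule exI[of _ "map Leaf w"]) (simp add: comp_def)
next
  case (step u v)
  then obtain ts where ts: "map tree_root ts = v" "\<forall>t\<in>set ts. parse_tree P t"
    "concat (map yield ts) = w" by blast
  from step(1) obtain l A r \<beta> where u: "u = l @ [NT A] @ r" and P: "(A, \<beta>) \<in> P"
    and v: "v = l @ \<beta> @ r"
    unfolding derive1_def by blast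
  from ts(1) v obtain ts1 ts23 where "ts = ts1 @ ts23" "map tree_root ts1 = l"
    "map tree_root ts23 = \<beta> @ r"
    by (metis map_eq_append_conv)
  moreover from this(3) obtain ts2 ts3 where "ts23 = ts2 @ ts3"
    "map tree_root ts2 = \<beta>" "map tree_root ts3 = r"
    by (metis map_eq_append_conv)
  ultimately show ?case using ts P u
    by (intro exI[of _ "ts1 @ [Node A ts2] @ ts3"]) auto
qed

lemma cfg_lang_parse_tree:
  "w \<in> cfg_lang P S \<longleftrightarrow> (\<exists>T. parse_tree P T \<and> tree_root T = NT S \<and> yield T = w)"
proof
  assume "w \<in> cfg_lang P S"
  then have "(derive1 P)\<^sup>*\<^sup>* [NT S] (map Tm w)" unfolding cfg_lang_def by simp
  from derives_parse_forest[OF this] obtain ts where "map tree_root ts = [NT S] \<and>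
    (\<forall>t\<in>set ts. parse_tree P t) \<and> concat (map yield ts) = w" ..
  then show "\<exists>T. parse_tree P T \<and> tree_root T = NT S \<and> yield T = w"
    by (cases ts) auto
next
  assume "\<exists>T. parse_tree P T \<and> tree_root T = NT S \<and> yield T = w"
  then obtain T where "parse_tree P T" "tree_root T = NT S" "yield T = w" by blast
  with parse_tree_derives[of P T] show "w \<in> cfg_lang P S" unfolding cfg_lang_def by simp
qed

text \<open>\<open>subtree T S u y\<close>: \<open>S\<close> occurs in \<open>T\<close>, with \<open>u\<close> the part of \<open>yield T\<close> to its left
  and \<open>y\<close> the part to its right.\<close>
inductive subtree :: "('n, 't) tree \<Rightarrow> ('n, 't) tree \<Rightarrow> 't list \<Rightarrow> 't list \<Rightarrow> bool" where
  subtree_refl: "subtree T T [] []"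
| subtree_child: "subtree t S u y \<Longrightarrow>
    subtree (Node A (ts1 @ t # ts2)) S (concat (map yield ts1) @ u) (y @ concat (map yield ts2))"

inductive proper_subtree :: "('n, 't) tree \<Rightarrow> ('n, 't) tree \<Rightarrow> 't list \<Rightarrow> 't list \<Rightarrow> bool" where
  "subtree t S u y \<Longrightarrow>
    proper_subtree (Node A (ts1 @ t # ts2)) S (concat (map yield ts1) @ u) (y @ concat (map yield ts2))"

lemma proper_subtree_imp_subtree: "proper_subtree T S u y \<Longrightarrow> subtree T S u y"
  by (induction rule: proper_subtree.induct) (rule subtree_child)

lemma subtree_yield: "subtree T S u y \<Longrightarrow> yield T = u @ yield S @ y"
  by (induction rule: subtree.induct) auto

lemma subtree_trans: "subtree T S u y \<Longrightarrow> subtree S R v x \<Longrightarrow> subtree T R (u @ v) (x @ y)"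
  by (induction rule: subtree.induct) (auto dest: subtree_child)

lemma subtree_parse_tree: "subtree T S u y \<Longrightarrow> parse_tree P T \<Longrightarrow> parse_tree P S"
  by (induction rule: subtree.induct) auto

lemma subtree_size: "subtree T S u y \<Longrightarrow> tree_size S \<le> tree_size T"
  by (induction rule: subtree.induct) auto

lemma proper_subtree_size: "proper_subtree T S u y \<Longrightarrow> tree_size S < tree_size T"
  by (induction rule: proper_subtree.induct) (auto dest: subtree_size)

lemma height_child: "t \<in> set ts \<Longrightarrow> height t < height (Node A ts)"
  by (simp add: le_imp_less_Suc)

lemma subtree_height: "subtree T S u y \<Longrightarrow> height S \<le> height T"
proof (induction rule: subtree.induct)
  case (subtree_child t S u y A ts1 ts2)
  then show ?case using height_child[of t "ts1 @ t # ts2" A] by simp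
qed simp

lemma subtree_derives:
  "subtree T S u y \<Longrightarrow> parse_tree P T \<Longrightarrow>
   (derive1 P)\<^sup>*\<^sup>* [tree_root T] (map Tm u @ [tree_root S] @ map Tm y)"
proof (induction rule: subtree.induct)
  case (subtree_child t S u y A ts1 ts2)
  have "derive1 P [NT A] (map tree_root ts1 @ [tree_root t] @ map tree_root ts2)"
    using subtree_child.prems derive1_Node[of A ts1 "t # ts2"] by simp
  moreover have "(derive1 P)\<^sup>*\<^sup>* (map tree_root ts1 @ [tree_root t] @ map tree_root ts2)
     (map Tm (concat (map yield ts1)) @ (map Tm u @ [tree_root S] @ map Tm y) @
      map Tm (concat (map yield ts2)))"
    using subtree_child parse_tree_derives[of P]
    by (intro derives_append parse_forest_derives) auto
  ultimately show ?case by (simp add: converse_rtranclp_into_rtranclp)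
qed simp

lemma subtree_replace:
  "subtree T S u y \<Longrightarrow> parse_tree P T \<Longrightarrow> parse_tree P S' \<Longrightarrow> tree_root S' = tree_root S \<Longrightarrow>
   \<exists>T'. parse_tree P T' \<and> tree_root T' = tree_root T \<and> yield T' = u @ yield S' @ y \<and>
     tree_size T' + tree_size S = tree_size T + tree_size S'"
proof (induction rule: subtree.induct)
  case (subtree_child t S u y A ts1 ts2)
  then obtain t' where "parse_tree P t'" "tree_root t' = tree_root t" "yield t' = u @ yield S' @ y"
     "tree_size t' + tree_size S = tree_size t + tree_size S'" by auto
  with subtree_child.prems show ?case
    by (intro exI[of _ "Node A (ts1 @ t' # ts2)"]) auto
qed auto

lemma highest_child:
  assumes "ts \<noteq> []"
  obtains t ts1 ts2 where "ts = ts1 @ t # ts2" and "height (Node A ts) = Suc (height t)"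
proof -
  let ?M = "Max (set (0 # map height ts))"
  obtain t0 where t0: "t0 \<in> set ts" using assms by (cases ts) auto
  have "?M \<in> set (0 # map height ts)" by (rule Max_in) auto
  moreover have "height t0 \<le> ?M" using t0 by (intro Max_ge) auto
  ultimately have "\<exists>t\<in>set ts. ?M = height t" using t0 by (metis le_zero_eq set_ConsD imageE set_map)
  then obtain t where "t \<in> set ts" "height (Node A ts) = Suc (height t)" by auto
  with that show ?thesis by (metis split_list)
qed

lemma length_yield_le:
  assumes "parse_tree P T" and "\<forall>(A, \<beta>)\<in>P. length \<beta> \<le> K" and "1 \<le> K"
  shows "length (yield T) \<le> K ^ height T"
  using assms(1)
proof (induction T)
  case (Node A ts)
  define M where "M = Max (set (0 # map height ts))"
  have "length (yield t) \<le> K ^ M" if "t \<in> set ts" for t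
  proof -
    have "length (yield t) \<le> K ^ height t" using Node that by auto
    also have "\<dots> \<le> K ^ M"
      using that assms(3) unfolding M_def by (intro power_increasing Max_ge) auto
    finally show ?thesis .
  qed
  then have "length (yield (Node A ts)) \<le> length ts * K ^ M"
    using sum_list_mono[of ts "\<lambda>t. length (yield t)" "\<lambda>_. K ^ M"]
    by (simp add: length_concat comp_def sum_list_triv)
  also have "length ts \<le> K" using Node.prems assms(2) by fastforce
  finally show ?case by (simp add: M_def)
qed simp

lemma subtree_of_height:
  "N < height T \<Longrightarrow> \<exists>S u y. subtree T S u y \<and> height S = Suc N"
proof (induction T)
  case (Node A ts)
  show ?case
  proof (cases "height (Node A ts) = Suc N")
    case False
    with Node.prems have "ts \<noteq> []" by (cases ts) auto
    then obtain t ts1 ts2 where ts: "ts = ts1 @ t # ts2" and h: "height (Node A ts) = Suc (height t)"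
      by (rule highest_child)
    have "t \<in> set ts" "N < height t" using ts h False Node.prems by auto
    with Node.IH obtain S u y where S: "subtree t S u y" "height S = Suc N" by blast
    show ?thesis using subtree_child[OF S(1), of A ts1 ts2] S(2) unfolding ts by blast
  qed (use subtree_refl in blast)
qed simp

definition repeated_nonterminal :: "('n, 't) tree \<Rightarrow> bool" where
  "repeated_nonterminal T \<longleftrightarrow> (\<exists>T1 u y T2 v x A. subtree T T1 u y \<and> proper_subtree T1 T2 v x \<and>
     tree_root T1 = NT A \<and> tree_root T2 = NT A)"

lemma repeated_nonterminal_Node:
  assumes "repeated_nonterminal t" and "t \<in> set ts"
  shows "repeated_nonterminal (Node A ts)"
proof -
  obtain ts1 ts2 where "ts = ts1 @ t # ts2" using assms(2) by (meson split_list)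
  with assms(1) show ?thesis unfolding repeated_nonterminal_def by (meson subtree_child)
qed

text \<open>Pigeonhole along a longest path: \<open>Z\<close> collects the nonterminals already seen above \<open>T\<close>.\<close>
lemma repeated_nonterminal_or_seen:
  assumes "parse_tree P T" and "finite P" and "Z \<subseteq> fst ` P"
    and "card (fst ` P) < height T + card Z"
  shows "repeated_nonterminal T \<or> (\<exists>S u y A. subtree T S u y \<and> tree_root S = NT A \<and> A \<in> Z)"
  using assms
proof (induction T arbitrary: Z)
  case (Leaf x)
  then show ?case using card_mono[of "fst ` P" Z] by simp
next
  case (Node A ts)
  have A: "A \<in> fst ` P" using Node.prems(1) by force
  show ?case
  proof (cases "A \<in> Z")
    case False
    have "finite Z" using Node.prems(2,3) finite_subset by blast
    then have cardZ: "card (insert A Z) = Suc (card Z)" using False by simp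
    have "card (insert A Z) \<le> card (fst ` P)"
      using A Node.prems(2,3) by (intro card_mono) auto
    with cardZ Node.prems(4) have "ts \<noteq> []" by (cases ts) auto
    then obtain t ts1 ts2 where ts: "ts = ts1 @ t # ts2" and h: "height (Node A ts) = Suc (height t)"
      by (rule highest_child)
    have t: "t \<in> set ts" using ts by simp
    have "repeated_nonterminal t \<or> (\<exists>S u y B. subtree t S u y \<and> tree_root S = NT B \<and> B \<in> insert A Z)"
    proof (rule Node.IH[OF t])
      show "parse_tree P t" using Node.prems(1) t by auto
      show "insert A Z \<subseteq> fst ` P" using A Node.prems(3) by blast
      show "card (fst ` P) < height t + card (insert A Z)" using Node.prems(4) h cardZ by simp
    qed fact
    then show ?thesis
    proof (elim disjE exE conjE)
      assume "repeated_nonterminal t"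
      with t show ?thesis by (blast intro: repeated_nonterminal_Node)
    next
      fix S u y B
      assume S: "subtree t S u y" "tree_root S = NT B" "B \<in> insert A Z"
      let ?u = "concat (map yield ts1) @ u" and ?y = "y @ concat (map yield ts2)"
      have "subtree (Node A ts) S ?u ?y" "proper_subtree (Node A ts) S ?u ?y"
        unfolding ts using S(1) by (rule subtree_child, rule proper_subtree.intros)
      with S subtree_refl show ?thesis unfolding repeated_nonterminal_def by fastforce
    qed
  qed (use subtree_refl in fastforce)
qed

lemma repeated_nonterminal_short_yield:
  assumes T: "parse_tree P T" and fin: "finite P"
    and K: "\<forall>(A, \<beta>)\<in>P. length \<beta> \<le> K" "1 \<le> K"
    and long: "K ^ card (fst ` P) < length (yield T)"
  obtains T1 u y T2 v x A where "subtree T T1 u y" "proper_subtree T1 T2 v x"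
    "tree_root T1 = NT A" "tree_root T2 = NT A" "length (yield T1) \<le> K ^ Suc (card (fst ` P))"
proof -
  let ?N = "card (fst ` P)"
  have "?N < height T"
  proof (rule ccontr)
    assume "\<not> ?N < height T"
    then have "K ^ height T \<le> K ^ ?N" using K(2) by (intro power_increasing) auto
    with length_yield_le[OF T K] long show False by linarith
  qed
  then obtain S u0 y0 where S: "subtree T S u0 y0" "height S = Suc ?N"
    using subtree_of_height by blast
  have "parse_tree P S" using subtree_parse_tree[OF S(1) T] .
  then have "repeated_nonterminal S"
    using repeated_nonterminal_or_seen[of P S "{}"] fin S(2) by auto
  then obtain T1 u1 y1 T2 v x A where T1: "subtree S T1 u1 y1" "proper_subtree T1 T2 v x"
    "tree_root T1 = NT A" "tree_root T2 = NT A"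
    unfolding repeated_nonterminal_def by blast
  have "length (yield T1) \<le> K ^ height T1"
    using length_yield_le[OF subtree_parse_tree[OF T1(1) \<open>parse_tree P S\<close>] K] .
  also have "\<dots> \<le> K ^ height S"
    using subtree_height[OF T1(1)] K(2) by (intro power_increasing) auto
  finally show ?thesis
    using that[OF subtree_trans[OF S(1) T1(1)] T1(2-4)] S(2) by simp
qed

text \<open>Cutting out an empty pumpable part would give a smaller tree with the same yield.\<close>
lemma minimal_parse_tree_pump_nonempty:
  assumes T: "parse_tree P T"
    and minimal: "\<And>T'. parse_tree P T' \<Longrightarrow> tree_root T' = tree_root T \<Longrightarrow> yield T' = yield T \<Longrightarrow>
      tree_size T \<le> tree_size T'"
    and T1: "subtree T T1 u y" and T2: "proper_subtree T1 T2 v x"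
    and roots: "tree_root T2 = tree_root T1"
  shows "v @ x \<noteq> []"
proof
  assume vx: "v @ x = []"
  have "parse_tree P T2"
    using subtree_parse_tree[OF proper_subtree_imp_subtree[OF T2] subtree_parse_tree[OF T1 T]] .
  then obtain T' where T': "parse_tree P T'" "tree_root T' = tree_root T"
    "yield T' = u @ yield T2 @ y" "tree_size T' + tree_size T1 = tree_size T + tree_size T2"
    using subtree_replace[OF T1 T] roots by blast
  have "yield T' = yield T"
    using T'(3) subtree_yield[OF T1] subtree_yield[OF proper_subtree_imp_subtree[OF T2]] vx
    by simp
  with minimal T' have "tree_size T \<le> tree_size T'" by blast
  with T'(4) proper_subtree_size[OF T2] show False by linarith
qed

lemma derives_iterate:
  assumes "(derive1 P)\<^sup>*\<^sup>* [NT A] (map Tm v @ [NT A] @ map Tm x)"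
  shows "(derive1 P)\<^sup>*\<^sup>* [NT A]
    (map Tm (concat (replicate i v)) @ [NT A] @ map Tm (concat (replicate i x)))"
proof (induction i)
  case (Suc i)
  have "(derive1 P)\<^sup>*\<^sup>* (map Tm (concat (replicate i v)) @ [NT A] @ map Tm (concat (replicate i x)))
     (map Tm (concat (replicate i v)) @ (map Tm v @ [NT A] @ map Tm x) @ map Tm (concat (replicate i x)))"
    by (rule derives_context[OF assms])
  also have "\<dots> = map Tm (concat (replicate i v @ [v])) @ [NT A] @ map Tm (concat (x # replicate i x))"
    by simp
  also have "\<dots> = map Tm (concat (replicate (Suc i) v)) @ [NT A] @ map Tm (concat (replicate (Suc i) x))"
    by (simp only: replicate_append_same replicate_Suc)
  finally show ?case using Suc.IH by (rule rtranclp_trans[rotated])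
qed simp

definition pumping_length :: "'t list set \<Rightarrow> nat \<Rightarrow> bool" where
  "pumping_length L p \<longleftrightarrow> (\<forall>z\<in>L. p < length z \<longrightarrow>
    (\<exists>u v w x y. z = u @ v @ w @ x @ y \<and> v @ x \<noteq> [] \<and> length (v @ x) \<le> p \<and>
      (\<forall>i. u @ concat (replicate i v) @ w @ concat (replicate i x) @ y \<in> L)))"

lemma cfg_lang_pump:
  assumes T: "parse_tree P T" "tree_root T = NT S"
    and T1: "subtree T T1 u y" and T2: "proper_subtree T1 T2 v x"
    and A: "tree_root T1 = NT A" "tree_root T2 = NT A"
  shows "u @ concat (replicate i v) @ yield T2 @ concat (replicate i x) @ y \<in> cfg_lang P S"
proof -
  have T1_tree: "parse_tree P T1" using subtree_parse_tree[OF T1 T(1)] .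
  have T2_sub: "subtree T1 T2 v x" using proper_subtree_imp_subtree[OF T2] .
  have "(derive1 P)\<^sup>*\<^sup>* [NT S] (map Tm u @ [NT A] @ map Tm y)"
    using subtree_derives[OF T1 T(1)] T(2) A by simp
  also have "(derive1 P)\<^sup>*\<^sup>* \<dots>
      (map Tm u @ (map Tm (concat (replicate i v)) @ [NT A] @ map Tm (concat (replicate i x))) @
       map Tm y)"
    using subtree_derives[OF T2_sub T1_tree] A by (intro derives_context derives_iterate) simp
  also have "(derive1 P)\<^sup>*\<^sup>* \<dots>
      ((map Tm u @ map Tm (concat (replicate i v))) @ map Tm (yield T2) @
       (map Tm (concat (replicate i x)) @ map Tm y))"
    using derives_context[OF parse_tree_derives[OF subtree_parse_tree[OF T2_sub T1_tree]],
        of "map Tm u @ map Tm (concat (replicate i v))" "map Tm (concat (replicate i x)) @ map Tm y"] A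
    by simp
  finally show ?thesis unfolding cfg_lang_def by simp
qed

theorem context_free_pumping_length:
  fixes L :: "'t list set"
  assumes "context_free L"
  obtains p where "pumping_length L p"
proof -
  obtain P :: "(nat \<times> (nat, 't) sym list) set" and S where fin: "finite P" and L: "L = cfg_lang P S"
    using assms unfolding context_free_def by blast
  define K where "K = Suc (\<Sum>(A, \<beta>)\<in>P. length \<beta>)"
  have "length \<beta> \<le> (\<Sum>(A, \<beta>)\<in>P. length \<beta>)" if "(A, \<beta>) \<in> P" for A \<beta>
    using member_le_sum[OF that _ fin, of "\<lambda>(A, \<beta>). length \<beta>"] by simp
  then have K: "\<forall>(A, \<beta>)\<in>P. length \<beta> \<le> K" "1 \<le> K" unfolding K_def by fastforce+
  define p where "p = K ^ Suc (card (fst ` P))"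
  have "pumping_length L p"
    unfolding pumping_length_def
  proof (intro ballI impI)
    fix z assume "z \<in> L" and long: "p < length z"
    then obtain T0 where "parse_tree P T0 \<and> tree_root T0 = NT S \<and> yield T0 = z"
      unfolding L cfg_lang_parse_tree by blast
    then obtain T where T: "parse_tree P T" "tree_root T = NT S" "yield T = z"
      and minimal: "\<And>T'. parse_tree P T' \<and> tree_root T' = NT S \<and> yield T' = z \<Longrightarrow>
        tree_size T \<le> tree_size T'"
      using ex_has_least_nat[of "\<lambda>T. parse_tree P T \<and> tree_root T = NT S \<and> yield T = z" T0 tree_size]
      by blast
    have "K ^ card (fst ` P) \<le> p" unfolding p_def using K(2) by (intro power_increasing) auto
    with long T(3) have "K ^ card (fst ` P) < length (yield T)" by simp
    then obtain T1 u y T2 v x A where T1: "subtree T T1 u y" "proper_subtree T1 T2 v x"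
      "tree_root T1 = NT A" "tree_root T2 = NT A" "length (yield T1) \<le> p"
      unfolding p_def by (rule repeated_nonterminal_short_yield[OF T(1) fin K])
    have "v @ x \<noteq> []"
    proof (rule minimal_parse_tree_pump_nonempty[OF T(1) _ T1(1,2)])
      show "tree_size T \<le> tree_size T'"
        if "parse_tree P T'" "tree_root T' = tree_root T" "yield T' = yield T" for T'
        using minimal[of T'] that T by simp
    qed (use T1(3,4) in simp)
    moreover have "z = u @ v @ yield T2 @ x @ y"
      using subtree_yield[OF T1(1)] subtree_yield[OF proper_subtree_imp_subtree[OF T1(2)]] T(3)
      by simp
    moreover have "length (v @ x) \<le> p"
      using subtree_yield[OF proper_subtree_imp_subtree[OF T1(2)]] T1(5) by simp
    moreover have "\<forall>i. u @ concat (replicate i v) @ yield T2 @ concat (replicate i x) @ y \<in> L"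
      using cfg_lang_pump[OF T(1,2) T1(1-4)] unfolding L by blast
    ultimately show "\<exists>u v w x y. z = u @ v @ w @ x @ y \<and> v @ x \<noteq> [] \<and> length (v @ x) \<le> p \<and>
      (\<forall>i. u @ concat (replicate i v) @ w @ concat (replicate i x) @ y \<in> L)"
      by blast
  qed
  then show ?thesis by (rule that)
qed

section \<open>Walks in a half-plane\<close>

definition step_proj :: "real \<Rightarrow> int \<times> int \<Rightarrow> real" where
  "step_proj \<theta> s = of_int (fst s) * sin \<theta> + of_int (snd s) * cos \<theta>"

definition word_proj :: "real \<Rightarrow> (int \<times> int) list \<Rightarrow> real" where
  "word_proj \<theta> w = sum_list (map (step_proj \<theta>) w)"

lemma word_proj_simps [simp]:
  "word_proj \<theta> [] = 0"
  "word_proj \<theta> (s # w) = step_proj \<theta> s + word_proj \<theta> w"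
  "word_proj \<theta> (w1 @ w2) = word_proj \<theta> w1 + word_proj \<theta> w2"
  by (auto simp: word_proj_def)

lemma word_proj_replicate [simp]: "word_proj \<theta> (replicate n s) = real n * step_proj \<theta> s"
  by (induction n) (auto simp: algebra_simps)

lemma word_proj_concat_replicate [simp]:
  "word_proj \<theta> (concat (replicate n w)) = real n * word_proj \<theta> w"
  by (induction n) (auto simp: algebra_simps)

lemma word_proj_eq_coordinates:
  "word_proj \<theta> w = of_int (sum_list (map fst w)) * sin \<theta> + of_int (sum_list (map snd w)) * cos \<theta>"
  by (induction w) (auto simp: step_proj_def algebra_simps)

lemma walk_pos_eq_sum_take:
  "k \<le> length w \<Longrightarrow> walk_pos w k = (sum_list (map fst (take k w)), sum_list (map snd (take k w)))"
  unfolding walk_pos_def by (simp add: sum_list_sum_nth lessThan_atLeast0 min_absorb1)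

lemma walk_in_halfplane_iff:
  "walk_in (halfplane \<theta>) w \<longleftrightarrow> (\<forall>k\<le>length w. 0 \<le> word_proj \<theta> (take k w))"
proof -
  have "walk_pos w k \<in> halfplane \<theta> \<longleftrightarrow> 0 \<le> word_proj \<theta> (take k w)" if "k \<le> length w" for k
    unfolding walk_pos_eq_sum_take[OF that] halfplane_def word_proj_eq_coordinates by simp
  then show ?thesis unfolding walk_in_def by blast
qed

lemma word_proj_nonneg_if_walks: "w \<in> walks (halfplane \<theta>) S \<Longrightarrow> 0 \<le> word_proj \<theta> w"
  unfolding walks_def walk_in_halfplane_iff by (auto dest: spec[of _ "length w"])

lemma replicate_two_steps_in_walks:
  assumes "A \<in> S" "B \<in> S" "0 \<le> step_proj \<theta> A" "step_proj \<theta> B \<le> 0"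
    and "0 \<le> real n * step_proj \<theta> A + real m * step_proj \<theta> B"
  shows "replicate n A @ replicate m B \<in> walks (halfplane \<theta>) S"
proof -
  have "0 \<le> word_proj \<theta> (take k (replicate n A @ replicate m B))" if "k \<le> n + m" for k
  proof (cases "k \<le> n")
    case True
    then show ?thesis using assms(3) by simp
  next
    case False
    with that have "take k (replicate n A @ replicate m B) = replicate n A @ replicate (k - n) B"
      by simp
    moreover have "real m * step_proj \<theta> B \<le> real (k - n) * step_proj \<theta> B"
      using that assms(4) by (intro mult_right_mono_neg) auto
    ultimately show ?thesis using assms(5) by simp
  qed
  then show ?thesis using assms(1,2) unfolding walks_def walk_in_halfplane_iff by auto
qed

text \<open>Pumping down (\<open>i = 0\<close>) and pumping up (\<open>i \<rightarrow> \<infinity>\<close>) confine the projection of the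
  pumped part.\<close>
lemma pumped_word_proj_bounds:
  assumes pumped: "\<forall>i. u @ concat (replicate i v) @ w @ concat (replicate i x) @ y \<in> walks (halfplane \<theta>) S"
  shows "0 \<le> word_proj \<theta> (v @ x)" and "word_proj \<theta> (v @ x) \<le> word_proj \<theta> (u @ v @ w @ x @ y)"
proof -
  define R where "R = word_proj \<theta> u + word_proj \<theta> w + word_proj \<theta> y"
  define c where "c = word_proj \<theta> (v @ x)"
  have R: "0 \<le> R + real i * c" for i
    using word_proj_nonneg_if_walks[OF pumped[rule_format, of i]]
    unfolding R_def c_def by (simp add: algebra_simps)
  show "0 \<le> word_proj \<theta> (v @ x)"
  proof (rule ccontr)
    assume "\<not> 0 \<le> word_proj \<theta> (v @ x)"
    then have neg: "0 < - c" unfolding c_def by simp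
    obtain i :: nat where "R / - c < real i" using reals_Archimedean2 by blast
    then have "R < real i * - c" using pos_divide_less_eq[OF neg] by blast
    with R[of i] show False by simp
  qed
  have "word_proj \<theta> (u @ v @ w @ x @ y) = R + c" unfolding R_def c_def by simp
  with R[of 0] show "word_proj \<theta> (v @ x) \<le> word_proj \<theta> (u @ v @ w @ x @ y)"
    unfolding c_def by simp
qed

lemma length_eq_count_list_two:
  "set w \<subseteq> {A, B} \<Longrightarrow> A \<noteq> B \<Longrightarrow> length w = count_list w A + count_list w B"
  by (induction w) auto

lemma word_proj_count_list_two:
  "set w \<subseteq> {A, B} \<Longrightarrow> A \<noteq> B \<Longrightarrow>
   word_proj \<theta> w = real (count_list w A) * step_proj \<theta> A + real (count_list w B) * step_proj \<theta> B"
  by (induction w) (auto simp: algebra_simps)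

section \<open>Small positive values of \<open>n a - m b\<close>\<close>

lemma positive_combinations_bounded_below:
  fixes a b :: real
  shows "\<exists>\<delta>>0. \<forall>j\<le>q. \<forall>k\<le>q. 0 < real j * a - real k * b \<longrightarrow> \<delta> \<le> real j * a - real k * b"
proof -
  define D where "D = {d \<in> (\<lambda>(j, k). real j * a - real k * b) ` ({..q} \<times> {..q}). 0 < d}"
  have "finite D" unfolding D_def by simp
  show ?thesis
  proof (cases "D = {}")
    case True
    then show ?thesis unfolding D_def by (intro exI[of _ 1]) force
  next
    case False
    have "0 < Min D" using Min_in[OF \<open>finite D\<close> False] unfolding D_def by blast
    moreover have "Min D \<le> real j * a - real k * b"
      if "j \<le> q" "k \<le> q" "0 < real j * a - real k * b" for j k
      using that \<open>finite D\<close> unfolding D_def by (intro Min_le) auto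
    ultimately show ?thesis by blast
  qed
qed

lemma exists_small_positive_combination:
  fixes a b \<epsilon> :: real
  assumes a: "0 < a" and b: "0 < b" and irrational: "a / b \<notin> \<rat>" and \<epsilon>: "0 < \<epsilon>"
  obtains n m :: nat where "0 < real n * a - real m * b" "real n * a - real m * b < \<epsilon>"
proof -
  define \<eta> where "\<eta> = min (\<epsilon> / b) 1"
  have \<eta>: "0 < \<eta>" "\<eta> \<le> 1" "\<eta> \<le> \<epsilon> / b" using \<epsilon> b by (auto simp: \<eta>_def)
  obtain n :: nat where "\<bar>frac (real n * (a / b)) - \<eta> / 2\<bar> < \<eta> / 2"
    using Kronecker_approx_1_explicit[OF irrational, of "\<eta> / 2" "\<eta> / 2"] \<eta> by auto
  then have f: "0 < frac (real n * (a / b))" "frac (real n * (a / b)) < \<eta>" by linarith+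
  define m where "m = nat \<lfloor>real n * (a / b)\<rfloor>"
  have "real m = real n * (a / b) - frac (real n * (a / b))"
    using a b unfolding m_def frac_def by simp
  then have "real n * a - real m * b = b * frac (real n * (a / b))"
    using b by (simp add: field_simps)
  moreover have "b * frac (real n * (a / b)) < \<epsilon>"
  proof -
    have "b * \<eta> \<le> \<epsilon>" using \<eta>(3) b by (simp add: field_simps)
    with mult_strict_left_mono[OF f(2) b] show ?thesis by linarith
  qed
  ultimately show ?thesis using that[of n m] f(1) b by simp
qed

lemma combination_eq_zero_if_irrational:
  fixes a b :: real
  assumes "a / b \<notin> \<rat>" and "real j * a = real k * b"
  shows "j = 0" and "k = 0"
proof -
  have "b \<noteq> 0" using assms(1) by auto
  show "j = 0"
  proof (rule ccontr)
    assume "j \<noteq> 0"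
    with assms(2) \<open>b \<noteq> 0\<close> have "a / b = real k / real j" by (simp add: field_simps)
    with assms(1) show False by simp
  qed
  with assms(2) \<open>b \<noteq> 0\<close> show "k = 0" by simp
qed

section \<open>Non-context-freeness\<close>

theorem walks_halfplane_not_context_free:
  assumes A: "A \<in> S" "0 < step_proj \<theta> A" and B: "B \<in> S" "step_proj \<theta> B < 0"
    and irrational: "step_proj \<theta> A / - step_proj \<theta> B \<notin> \<rat>"
  shows "\<not> context_free (walks (halfplane \<theta>) S)"
proof
  assume "context_free (walks (halfplane \<theta>) S)"
  then obtain p where pump: "pumping_length (walks (halfplane \<theta>) S) p"
    by (rule context_free_pumping_length)
  define a b where "a = step_proj \<theta> A" and "b = - step_proj \<theta> B"
  have ab: "0 < a" "0 < b" "a / b \<notin> \<rat>" "A \<noteq> B" using A B irrational unfolding a_def b_def by auto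
  obtain \<delta> where \<delta>: "0 < \<delta>"
    and \<delta>_le: "\<And>j k. j \<le> p \<Longrightarrow> k \<le> p \<Longrightarrow> 0 < real j * a - real k * b \<Longrightarrow> \<delta> \<le> real j * a - real k * b"
    using positive_combinations_bounded_below[of p a b] by blast
  obtain n m where nm: "0 < real n * a - real m * b" "real n * a - real m * b < \<delta>"
    using exists_small_positive_combination[OF ab(1-3) \<delta>] .
  define z where "z = replicate n A @ replicate m B"
  have z_walks: "z \<in> walks (halfplane \<theta>) S"
    unfolding z_def using A B nm(1) unfolding a_def b_def by (intro replicate_two_steps_in_walks) auto
  have long: "p < length z"
  proof (rule ccontr)
    assume "\<not> p < length z"
    then have "n \<le> p" "m \<le> p" unfolding z_def by auto
    with \<delta>_le[OF this nm(1)] nm(2) show False by simp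
  qed
  from pump[unfolded pumping_length_def, rule_format, OF z_walks long]
  obtain u v w x y where z: "z = u @ v @ w @ x @ y" "v @ x \<noteq> []" "length (v @ x) \<le> p"
    and pumped: "\<forall>i. u @ concat (replicate i v) @ w @ concat (replicate i x) @ y \<in> walks (halfplane \<theta>) S"
    by blast
  define j k where "j = count_list (v @ x) A" and "k = count_list (v @ x) B"
  have "set (v @ x) \<subseteq> set z" using z(1) by auto
  then have vx: "set (v @ x) \<subseteq> {A, B}" unfolding z_def by auto
  have jk: "j + k = length (v @ x)"
    using length_eq_count_list_two[OF vx ab(4)] unfolding j_def k_def by simp
  have "word_proj \<theta> (v @ x) = real j * a - real k * b"
    unfolding j_def k_def a_def b_def using word_proj_count_list_two[OF vx ab(4)] by simp
  moreover have "word_proj \<theta> z = real n * a - real m * b" unfolding z_def a_def b_def by simp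
  moreover have "word_proj \<theta> (v @ x) \<le> word_proj \<theta> z"
    using pumped_word_proj_bounds(2)[OF pumped] by (simp only: z(1))
  ultimately have c: "0 \<le> real j * a - real k * b" "real j * a - real k * b < \<delta>"
    using pumped_word_proj_bounds(1)[OF pumped] nm(2) by linarith+
  have "j \<le> p" "k \<le> p" using jk z(3) by linarith+
  with \<delta>_le c have "real j * a = real k * b" by force
  then have "j = 0" "k = 0" using combination_eq_zero_if_irrational[OF ab(3)] by blast+
  with jk z(2) show False by simp
qed

theorem mainTheorem6:
  fixes S :: "(int \<times> int) set" and \<theta>s :: real
  assumes fin: "finite S"
    and theta_range: "0 \<le> \<theta>s" "\<theta>s \<le> pi / 2"
    and theta_max: "\<forall>\<theta>. 0 \<le> \<theta> \<and> \<theta> \<le> pi / 2 \<longrightarrow> rho S \<theta> \<le> rho S \<theta>s"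
    and nontrivial: "\<exists>(i, j)\<in>S. \<exists>(k, l)\<in>S.
        let a = real_of_int i * sin \<theta>s + real_of_int j * cos \<theta>s;
            b = - (real_of_int k * sin \<theta>s + real_of_int l * cos \<theta>s)
        in a > 0 \<and> b > 0 \<and> a / b \<notin> \<rat>"
    and irrat: "tan \<theta>s \<notin> \<rat>"
  shows "\<not> context_free (walks (halfplane \<theta>s) S)"
proof -
  obtain A B where "A \<in> S" "B \<in> S" "0 < step_proj \<theta>s A" "0 < - step_proj \<theta>s B"
    "step_proj \<theta>s A / - step_proj \<theta>s B \<notin> \<rat>"
    using nontrivial unfolding step_proj_def Let_def by fastforce
  then show ?thesis by (intro walks_halfplane_not_context_free) auto
qed

end
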